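(* Let $S$ be the quantum system with Hilbert space $\mathcal H_S=\mathcal H_A\otimes\mathcal H_B$ (finite-dimensional), whose states are all density operators on $\mathcal H_S$ and whose transformations are all quantum channels on $\mathsf{Lin}(\mathcal H_S)$. Let the agent $A$ have $\mathsf{Act}(A;S)=\{\mathcal A\otimes\mathcal I_B:\mathcal A\in\mathsf{Chan}(A)\}$. Then two states $\rho,\sigma$ are equivalent for $A$ if and only if $\operatorname{Tr}_B[\rho]=\operatorname{Tr}_B[\sigma]$, where $\operatorname{Tr}_B$ is the partial trace over $\mathcal H_B$.
   Context: $\mathsf{Chan}(X)$ is the set of quantum channels on $\mathsf{Lin}(\mathcal H_X)$. For an agent $A$ (a subset $\mathsf{Act}(A;S)$ of transformations), $\mathsf{Act}(A;S)'$ is the set of all channels on $\mathcal H_S$ commuting with every element of $\mathsf{Act}(A;S)$, and $\mathrm{Deg}_{A'}(\psi)=\{\mathcal B(\psi):\mathcal B\in\mathsf{Act}(A;S)'\}$. Two states $\rho,\sigma$ are equivalent for $A$ if there are states $\rho_1=\rho,\dots,\rho_n=\sigma$ with $\mathrm{Deg}_{A'}(\rho_i)\cap\mathrm{Deg}_{A'}(\rho_{i+1})\neq\emptyset$ for all $i$. *)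

theory Defs
  imports "Jordan_Normal_Form.Matrix" "Jordan_Normal_Form.Conjugate"
begin

text \<open>The tensor product H_A (dim dA) times H_B (dim dB) has dimension dA*dB, and the
  basis vector |a> tensor |b> has index a*dB + b (Kronecker convention).\<close>

definition psd :: "nat \<Rightarrow> complex mat \<Rightarrow> bool" where
  "psd n M \<longleftrightarrow> M \<in> carrier_mat n n \<and>
     (\<forall>v \<in> carrier_vec n. Im (conjugate v \<bullet> (M *\<^sub>v v)) = 0 \<and> Re (conjugate v \<bullet> (M *\<^sub>v v)) \<ge> 0)"

definition mtrace :: "complex mat \<Rightarrow> complex" where
  "mtrace M = (\<Sum>i<dim_row M. M $$ (i, i))"

definition density_op :: "nat \<Rightarrow> complex mat \<Rightarrow> bool" where
  "density_op n \<rho> \<longleftrightarrow> psd n \<rho> \<and> mtrace \<rho> = 1"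

text \<open>The (k,l) block of an operator on C^dA tensor C^dB: the dA x dA matrix
  with entries <i,k| M |j,l>.\<close>
definition block :: "nat \<Rightarrow> nat \<Rightarrow> complex mat \<Rightarrow> nat \<Rightarrow> nat \<Rightarrow> complex mat" where
  "block dA dB M k l = mat dA dA (\<lambda>(i, j). M $$ (i * dB + k, j * dB + l))"

text \<open>(Phi tensor id_B)(M) = sum_{k,l} Phi(M^{kl}) tensor |k><l|.\<close>
definition tensor_id :: "(complex mat \<Rightarrow> complex mat) \<Rightarrow> nat \<Rightarrow> nat \<Rightarrow> complex mat \<Rightarrow> complex mat" where
  "tensor_id \<Phi> dA dB M = mat (dA * dB) (dA * dB)
     (\<lambda>(r, c). (\<Phi> (block dA dB M (r mod dB) (c mod dB))) $$ (r div dB, c div dB))"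

definition linear_map_on :: "nat \<Rightarrow> (complex mat \<Rightarrow> complex mat) \<Rightarrow> bool" where
  "linear_map_on n \<Phi> \<longleftrightarrow>
     (\<forall>M \<in> carrier_mat n n. \<Phi> M \<in> carrier_mat n n) \<and>
     (\<forall>M \<in> carrier_mat n n. \<forall>N \<in> carrier_mat n n. \<Phi> (M + N) = \<Phi> M + \<Phi> N) \<and>
     (\<forall>M \<in> carrier_mat n n. \<forall>c::complex. \<Phi> (c \<cdot>\<^sub>m M) = c \<cdot>\<^sub>m \<Phi> M)"

definition completely_positive :: "nat \<Rightarrow> (complex mat \<Rightarrow> complex mat) \<Rightarrow> bool" where
  "completely_positive n \<Phi> \<longleftrightarrow>
     (\<forall>k > 0. \<forall>M. psd (n * k) M \<longrightarrow> psd (n * k) (tensor_id \<Phi> n k M))"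

definition trace_preserving :: "nat \<Rightarrow> (complex mat \<Rightarrow> complex mat) \<Rightarrow> bool" where
  "trace_preserving n \<Phi> \<longleftrightarrow> (\<forall>M \<in> carrier_mat n n. mtrace (\<Phi> M) = mtrace M)"

definition channel :: "nat \<Rightarrow> (complex mat \<Rightarrow> complex mat) \<Rightarrow> bool" where
  "channel n \<Phi> \<longleftrightarrow> linear_map_on n \<Phi> \<and> completely_positive n \<Phi> \<and> trace_preserving n \<Phi>"

text \<open>Equality of maps as maps on Lin(C^n).\<close>
definition commutant :: "nat \<Rightarrow> (complex mat \<Rightarrow> complex mat) set \<Rightarrow> (complex mat \<Rightarrow> complex mat) set" where
  "commutant n Act = {\<B>. channel n \<B> \<and>
     (\<forall>\<C> \<in> Act. \<forall>M \<in> carrier_mat n n. \<B> (\<C> M) = \<C> (\<B> M))}"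

definition Deg :: "nat \<Rightarrow> (complex mat \<Rightarrow> complex mat) set \<Rightarrow> complex mat \<Rightarrow> complex mat set" where
  "Deg n Act \<psi> = {\<B> \<psi> | \<B>. \<B> \<in> commutant n Act}"

definition overlap_step :: "nat \<Rightarrow> (complex mat \<Rightarrow> complex mat) set \<Rightarrow> complex mat \<Rightarrow> complex mat \<Rightarrow> bool" where
  "overlap_step n Act \<rho> \<sigma> \<longleftrightarrow> density_op n \<rho> \<and> density_op n \<sigma> \<and> Deg n Act \<rho> \<inter> Deg n Act \<sigma> \<noteq> {}"

definition agent_equiv :: "nat \<Rightarrow> (complex mat \<Rightarrow> complex mat) set \<Rightarrow> complex mat \<Rightarrow> complex mat \<Rightarrow> bool" where
  "agent_equiv n Act \<rho> \<sigma> \<longleftrightarrow> density_op n \<rho> \<and> density_op n \<sigma> \<and> (overlap_step n Act)\<^sup>*\<^sup>* \<rho> \<sigma>"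

definition local_actions :: "nat \<Rightarrow> nat \<Rightarrow> (complex mat \<Rightarrow> complex mat) set" where
  "local_actions dA dB = {tensor_id \<A> dA dB | \<A>. channel dA \<A>}"

definition partial_trace_B :: "nat \<Rightarrow> nat \<Rightarrow> complex mat \<Rightarrow> complex mat" where
  "partial_trace_B dA dB M = mat dA dA (\<lambda>(i, j). \<Sum>k<dB. M $$ (i * dB + k, j * dB + k))"

end

theory Submission
  imports Defs
begin

text \<open>If the partial traces of two states agree, the channel that discards B and prepares a fixed
  pure state on B commutes with every \<open>\<A> \<otimes> \<I>\<^sub>B\<close> and sends both states to the same state, so
  they are equivalent in a single step.
  Conversely, a channel \<open>\<B>\<close> commuting with all \<open>\<A> \<otimes> \<I>\<^sub>B\<close> preserves \<open>Tr\<^sub>B\<close>. Indeed, let \<open>\<R>\<^sub>u\<close>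
  replace the A-system by a pure state \<open>u\<close>; then \<open>Tr\<^sub>B ((\<R>\<^sub>u \<otimes> \<I>\<^sub>B) X) = Tr X \<cdot> |u\<rangle>\<langle>u|\<close> only depends
  on \<open>Tr X\<close>, which \<open>\<B>\<close> preserves, so \<open>\<B>\<close> preserves \<open>Tr\<^sub>B\<close> on the range of \<open>\<R>\<^sub>u \<otimes> \<I>\<^sub>B\<close>, which
  contains every \<open>|u\<rangle>\<langle>u| \<otimes> Y\<close>. By polarisation these operators span everything. Hence \<open>Tr\<^sub>B\<close> is
  constant along every chain of overlapping degradation sets.\<close>

section \<open>Positivity via quadratic forms\<close>

definition qform :: "nat \<Rightarrow> complex mat \<Rightarrow> (nat \<Rightarrow> complex) \<Rightarrow> complex" where
  "qform n M v = (\<Sum>i<n. \<Sum>j<n. cnj (v i) * M $$ (i, j) * v j)"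

lemma qform_conv_scalar_prod:
  assumes "M \<in> carrier_mat n n" "v \<in> carrier_vec n"
  shows "conjugate v \<bullet> (M *\<^sub>v v) = qform n M (\<lambda>i. v $ i)"
  using assms unfolding qform_def scalar_prod_def
  by (auto simp: sum_distrib_left mult.assoc scalar_prod_def intro!: sum.cong)

lemma psd_iff_qform_nonneg:
  "psd n M \<longleftrightarrow> M \<in> carrier_mat n n \<and> (\<forall>v. qform n M v \<ge> 0)"
proof
  assume psd: "psd n M"
  hence M: "M \<in> carrier_mat n n" unfolding psd_def by auto
  show "M \<in> carrier_mat n n \<and> (\<forall>v. qform n M v \<ge> 0)"
  proof (intro conjI allI M)
    fix v :: "nat \<Rightarrow> complex"
    have "qform n M v = qform n M (\<lambda>i. vec n v $ i)"
      unfolding qform_def by (auto intro!: sum.cong)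
    also have "\<dots> = conjugate (vec n v) \<bullet> (M *\<^sub>v vec n v)"
      using qform_conv_scalar_prod[OF M] by simp
    finally show "qform n M v \<ge> 0"
      using psd unfolding psd_def less_eq_complex_def by auto
  qed
next
  assume "M \<in> carrier_mat n n \<and> (\<forall>v. qform n M v \<ge> 0)"
  thus "psd n M"
    unfolding psd_def less_eq_complex_def using qform_conv_scalar_prod by fastforce
qed

lemma sum_lessThan_fibres:
  assumes "\<And>r. r < N1 \<Longrightarrow> g r < (N0::nat)"
  shows "(\<Sum>p<N0. \<Sum>r\<in>{r\<in>{..<N1}. g r = p}. h p r) = (\<Sum>r<(N1::nat). h (g r) r)"
proof -
  have "(\<Sum>p<N0. \<Sum>r\<in>{r\<in>{..<N1}. g r = p}. h p r) =
        (\<Sum>p<N0. \<Sum>r\<in>{r\<in>{..<N1}. g r = p}. h (g r) r)"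
    by (intro sum.cong) auto
  also have "\<dots> = (\<Sum>r<N1. h (g r) r)"
    by (rule sum.group) (use assms in auto)
  finally show ?thesis .
qed

lemma bilinear_sum_fibres:
  fixes b :: "nat \<Rightarrow> complex"
  assumes "\<And>r. r < N1 \<Longrightarrow> g r < (N0::nat)"
  shows "(\<Sum>r<N1. \<Sum>c<N1. a r * M $$ (g r, g c) * b c) =
    (\<Sum>p<N0. \<Sum>q<N0. (\<Sum>r\<in>{r\<in>{..<N1}. g r = p}. a r) * M $$ (p, q) *
                       (\<Sum>c\<in>{c\<in>{..<N1}. g c = q}. b c))"
    (is "?lhs = (\<Sum>p<N0. \<Sum>q<N0. ?A p * M $$ (p, q) * ?B q)")
proof -
  have inner: "(\<Sum>c<N1. M $$ (p, g c) * b c) = (\<Sum>q<N0. M $$ (p, q) * ?B q)" for p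
    using sum_lessThan_fibres[OF assms, where h = "\<lambda>q c. M $$ (p, q) * b c"]
    by (simp add: sum_distrib_left)
  have "?lhs = (\<Sum>r<N1. a r * (\<Sum>c<N1. M $$ (g r, g c) * b c))"
    by (simp add: sum_distrib_left mult.assoc)
  also have "\<dots> = (\<Sum>r<N1. a r * (\<Sum>q<N0. M $$ (g r, q) * ?B q))"
    using inner by simp
  also have "\<dots> = (\<Sum>p<N0. \<Sum>r\<in>{r\<in>{..<N1}. g r = p}. a r * (\<Sum>q<N0. M $$ (p, q) * ?B q))"
    using sum_lessThan_fibres[OF assms, where h = "\<lambda>p r. a r * (\<Sum>q<N0. M $$ (p, q) * ?B q)"]
    by simp
  also have "\<dots> = (\<Sum>p<N0. \<Sum>q<N0. ?A p * M $$ (p, q) * ?B q)"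
    by (simp add: sum_distrib_left sum_distrib_right mult.assoc,
        rule sum.cong[OF refl], subst sum.swap, rule sum.cong[OF refl], rule sum.swap)
  finally show ?thesis .
qed

text \<open>The hypothesis says \<open>N = \<Sum>\<^sub>m K\<^sub>m M K\<^sub>m\<^sup>*\<close>, where row \<open>r\<close> of \<open>K\<^sub>m\<close> has the single entry
  \<open>\<alpha> m r\<close> in column \<open>g m r\<close>; the quadratic form of \<open>N\<close> at \<open>v\<close> is then the sum of those of \<open>M\<close>
  at the vectors \<open>K\<^sub>m\<^sup>* v\<close>.\<close>

lemma psd_kraus_selection:
  assumes M: "psd N0 M" and N: "N \<in> carrier_mat N1 N1"
    and g: "\<And>m r. m < L \<Longrightarrow> r < N1 \<Longrightarrow> g m r < N0"
    and entries: "\<And>r c. r < N1 \<Longrightarrow> c < N1 \<Longrightarrow>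
       N $$ (r, c) = (\<Sum>m<(L::nat). \<alpha> m r * M $$ (g m r, g m c) * cnj (\<alpha> m c))"
  shows "psd N1 N"
  unfolding psd_iff_qform_nonneg
proof (intro conjI allI N)
  fix v
  define w where "w m q = (\<Sum>c\<in>{c\<in>{..<N1}. g m c = q}. cnj (\<alpha> m c) * v c)" for m q
  have "qform N1 N v =
      (\<Sum>r<N1. \<Sum>c<N1. \<Sum>m<L. (cnj (v r) * \<alpha> m r) * M $$ (g m r, g m c) * (cnj (\<alpha> m c) * v c))"
    unfolding qform_def using entries
    by (auto simp: sum_distrib_left sum_distrib_right mult.assoc mult.left_commute intro!: sum.cong)
  also have "\<dots> =
      (\<Sum>m<L. \<Sum>r<N1. \<Sum>c<N1. (cnj (v r) * \<alpha> m r) * M $$ (g m r, g m c) * (cnj (\<alpha> m c) * v c))"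
    by (simp add: sum.swap[of _ "{..<L}"])
  also have "\<dots> = (\<Sum>m<L. qform N0 M (w m))"
  proof (intro sum.cong refl)
    fix m assume "m \<in> {..<L}"
    hence gm: "\<And>r. r < N1 \<Longrightarrow> g m r < N0" using g by auto
    have cnj_w: "cnj (w m p) = (\<Sum>r\<in>{r\<in>{..<N1}. g m r = p}. cnj (v r) * \<alpha> m r)" for p
      unfolding w_def by (simp add: mult.commute)
    show "(\<Sum>r<N1. \<Sum>c<N1. (cnj (v r) * \<alpha> m r) * M $$ (g m r, g m c) * (cnj (\<alpha> m c) * v c)) =
        qform N0 M (w m)"
      using bilinear_sum_fibres[OF gm, where a = "\<lambda>r. cnj (v r) * \<alpha> m r" and M = M
          and b = "\<lambda>c. cnj (\<alpha> m c) * v c"]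
      unfolding qform_def cnj_w unfolding w_def by simp
  qed
  also have "\<dots> \<ge> 0"
    using M unfolding psd_iff_qform_nonneg by (intro sum_nonneg) auto
  finally show "qform N1 N v \<ge> 0" .
qed

lemma mult_add_less_mult: "a < (A::nat) \<Longrightarrow> b < B \<Longrightarrow> a * B + b < A * B"
proof -
  assume "a < A" "b < B"
  hence "a * B + b < Suc a * B" by simp
  also have "\<dots> \<le> A * B" using \<open>a < A\<close> by (intro mult_right_mono) auto
  finally show ?thesis .
qed

lemma div_less_of_less_mult: "r < A * (B::nat) \<Longrightarrow> r div B < A"
  by (simp add: less_mult_imp_div_less)

lemma sum_lessThan_mult: "(\<Sum>r<A * (B::nat). f r) = (\<Sum>a<A. \<Sum>b<B. f (a * B + b))"
  by (simp add: sum.nat_group[symmetric] sum.atLeastLessThan_shift_0 atLeast0LessThan comp_def)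

lemma carrier_mat_induct_units:
  fixes P :: "'a::comm_ring_1 mat \<Rightarrow> bool"
  assumes M: "M \<in> carrier_mat n m"
    and zero: "P (0\<^sub>m n m)"
    and add_smult: "\<And>A B c. A \<in> carrier_mat n m \<Longrightarrow> B \<in> carrier_mat n m \<Longrightarrow> P A \<Longrightarrow> P B \<Longrightarrow>
      P (A + c \<cdot>\<^sub>m B)"
    and units: "\<And>i j. i < n \<Longrightarrow> j < m \<Longrightarrow> P (mat n m (\<lambda>rc. if rc = (i, j) then 1 else 0))"
  shows "P M"
proof -
  define part where "part S = mat n m (\<lambda>rc. if rc \<in> S then M $$ rc else 0)" for S
  have part_carrier: "part S \<in> carrier_mat n m" for S unfolding part_def by simp
  have "P (part S)" if "S \<subseteq> {..<n} \<times> {..<m}" for S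
  proof -
    have "finite S" using that finite_subset by blast
    thus ?thesis using that
    proof (induction S rule: finite_induct)
      case empty
      have "part {} = 0\<^sub>m n m" unfolding part_def by (intro eq_matI) auto
      thus ?case using zero by simp
    next
      case (insert ij S)
      obtain i j where ij: "ij = (i, j)" by fastforce
      have "part (insert ij S) = part S + M $$ (i, j) \<cdot>\<^sub>m mat n m (\<lambda>rc. if rc = (i, j) then 1 else 0)"
        using insert.hyps(2) unfolding part_def ij by (intro eq_matI) auto
      moreover have "i < n" "j < m" using insert.prems ij by auto
      ultimately show ?case
        using insert add_smult[of "part S"] units part_carrier by auto
    qed
  qed
  moreover have "part ({..<n} \<times> {..<m}) = M" unfolding part_def using M by (intro eq_matI) auto
  ultimately show ?thesis by force
qed

lemma linear_map_on_carrier: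
  "linear_map_on n \<Phi> \<Longrightarrow> M \<in> carrier_mat n n \<Longrightarrow> \<Phi> M \<in> carrier_mat n n"
  unfolding linear_map_on_def by auto

lemma linear_map_on_add:
  "linear_map_on n \<Phi> \<Longrightarrow> M \<in> carrier_mat n n \<Longrightarrow> N \<in> carrier_mat n n \<Longrightarrow>
   \<Phi> (M + N) = \<Phi> M + \<Phi> N"
  unfolding linear_map_on_def by auto

lemma linear_map_on_smult:
  "linear_map_on n \<Phi> \<Longrightarrow> M \<in> carrier_mat n n \<Longrightarrow> \<Phi> (c \<cdot>\<^sub>m M) = c \<cdot>\<^sub>m \<Phi> M"
  unfolding linear_map_on_def by auto

lemma linear_map_on_zero:
  assumes "linear_map_on n \<Phi>"
  shows "\<Phi> (0\<^sub>m n n) = 0\<^sub>m n n"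
proof -
  have "0\<^sub>m n n = (0::complex) \<cdot>\<^sub>m 0\<^sub>m n n" by (intro eq_matI) auto
  hence "\<Phi> (0\<^sub>m n n) = 0 \<cdot>\<^sub>m \<Phi> (0\<^sub>m n n)"
    using linear_map_on_smult[OF assms, of "0\<^sub>m n n" 0] by simp
  also have "\<dots> = 0\<^sub>m n n"
    using linear_map_on_carrier[OF assms, of "0\<^sub>m n n"] by (intro eq_matI) auto
  finally show ?thesis .
qed

lemma commutantD:
  assumes "\<B> \<in> commutant n Act"
  shows "linear_map_on n \<B>" "trace_preserving n \<B>"
    "\<And>\<C> M. \<C> \<in> Act \<Longrightarrow> M \<in> carrier_mat n n \<Longrightarrow> \<B> (\<C> M) = \<C> (\<B> M)"
  using assms unfolding commutant_def channel_def by auto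

lemma mtrace_add:
  "M \<in> carrier_mat n n \<Longrightarrow> N \<in> carrier_mat n n \<Longrightarrow> mtrace (M + N) = mtrace M + mtrace N"
  unfolding mtrace_def by (simp add: sum.distrib)

lemma mtrace_smult: "M \<in> carrier_mat n n \<Longrightarrow> mtrace (c \<cdot>\<^sub>m M) = c * mtrace M"
  unfolding mtrace_def by (simp add: sum_distrib_left)

lemma partial_trace_B_carrier [simp]: "partial_trace_B dA dB M \<in> carrier_mat dA dA"
  unfolding partial_trace_B_def by simp

lemma partial_trace_B_dims [simp]:
  "dim_row (partial_trace_B dA dB M) = dA" "dim_col (partial_trace_B dA dB M) = dA"
  unfolding partial_trace_B_def by simp_all

lemma partial_trace_B_index:
  "i < dA \<Longrightarrow> j < dA \<Longrightarrow>
   partial_trace_B dA dB M $$ (i, j) = (\<Sum>k<dB. M $$ (i * dB + k, j * dB + k))"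
  unfolding partial_trace_B_def by simp

lemma partial_trace_B_add:
  assumes "M \<in> carrier_mat (dA * dB) (dA * dB)" "N \<in> carrier_mat (dA * dB) (dA * dB)"
  shows "partial_trace_B dA dB (M + N) = partial_trace_B dA dB M + partial_trace_B dA dB N"
  using assms
  by (intro eq_matI) (auto simp: partial_trace_B_index mult_add_less_mult sum.distrib)

lemma partial_trace_B_smult:
  assumes "M \<in> carrier_mat (dA * dB) (dA * dB)"
  shows "partial_trace_B dA dB (c \<cdot>\<^sub>m M) = c \<cdot>\<^sub>m partial_trace_B dA dB M"
  using assms
  by (intro eq_matI) (auto simp: partial_trace_B_index mult_add_less_mult sum_distrib_left)

lemma mtrace_tensor_expand:
  "M \<in> carrier_mat (dA * dB) (dA * dB) \<Longrightarrow>
   mtrace M = (\<Sum>a<dA. \<Sum>b<dB. M $$ (a * dB + b, a * dB + b))"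
  unfolding mtrace_def by (simp add: sum_lessThan_mult)

lemma mtrace_partial_trace_B:
  "M \<in> carrier_mat (dA * dB) (dA * dB) \<Longrightarrow> mtrace (partial_trace_B dA dB M) = mtrace M"
  by (simp add: mtrace_def partial_trace_B_index mtrace_tensor_expand[symmetric])

lemma block_carrier [simp]: "block dA dB M k l \<in> carrier_mat dA dA"
  unfolding block_def by simp

lemma tensor_id_carrier [simp]: "tensor_id \<Phi> dA dB M \<in> carrier_mat (dA * dB) (dA * dB)"
  unfolding tensor_id_def by simp

lemma tensor_id_index:
  "r < dA * dB \<Longrightarrow> c < dA * dB \<Longrightarrow>
   tensor_id \<Phi> dA dB M $$ (r, c) = \<Phi> (block dA dB M (r mod dB) (c mod dB)) $$ (r div dB, c div dB)"
  unfolding tensor_id_def by simp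

lemma partial_trace_B_tensor_id:
  assumes \<Phi>: "linear_map_on dA \<Phi>"
  shows "partial_trace_B dA dB (tensor_id \<Phi> dA dB M) = \<Phi> (partial_trace_B dA dB M)"
proof -
  define S where "S m = mat dA dA (\<lambda>(i, j). \<Sum>k<m. M $$ (i * dB + k, j * dB + k))" for m
  have S_carrier: "S m \<in> carrier_mat dA dA" for m unfolding S_def by simp
  have S_image: "\<forall>i<dA. \<forall>j<dA. \<Phi> (S m) $$ (i, j) = (\<Sum>k<m. \<Phi> (block dA dB M k k) $$ (i, j))" for m
  proof (induction m)
    case 0
    have "S 0 = 0\<^sub>m dA dA" unfolding S_def by (intro eq_matI) auto
    thus ?case using linear_map_on_zero[OF \<Phi>] by simp
  next
    case (Suc m)
    have "S (Suc m) = S m + block dA dB M m m"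
      unfolding S_def block_def by (intro eq_matI) auto
    hence "\<Phi> (S (Suc m)) = \<Phi> (S m) + \<Phi> (block dA dB M m m)"
      using linear_map_on_add[OF \<Phi> S_carrier block_carrier] by simp
    moreover have "\<Phi> (block dA dB M m m) \<in> carrier_mat dA dA"
      using linear_map_on_carrier[OF \<Phi>] by simp
    ultimately show ?case using Suc by auto
  qed
  have "S dB = partial_trace_B dA dB M" unfolding S_def partial_trace_B_def by simp
  moreover have "\<Phi> (S dB) \<in> carrier_mat dA dA" using linear_map_on_carrier[OF \<Phi> S_carrier] .
  ultimately show ?thesis
    using S_image[of dB]
    by (intro eq_matI) (auto simp: partial_trace_B_index tensor_id_index mult_add_less_mult)
qed

section \<open>Discarding B\<close>

text \<open>\<open>M \<mapsto> Tr\<^sub>B M \<otimes> |0\<rangle>\<langle>0|\<close>.\<close>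

definition reset_B :: "nat \<Rightarrow> nat \<Rightarrow> complex mat \<Rightarrow> complex mat" where
  "reset_B dA dB M = mat (dA * dB) (dA * dB) (\<lambda>(r, c).
     if r mod dB = 0 \<and> c mod dB = 0 then partial_trace_B dA dB M $$ (r div dB, c div dB) else 0)"

lemma reset_B_index:
  "r < dA * dB \<Longrightarrow> c < dA * dB \<Longrightarrow> reset_B dA dB M $$ (r, c) =
   (if r mod dB = 0 \<and> c mod dB = 0 then partial_trace_B dA dB M $$ (r div dB, c div dB) else 0)"
  unfolding reset_B_def by simp

lemma reset_B_linear: "linear_map_on (dA * dB) (reset_B dA dB)"
  unfolding linear_map_on_def
  by (auto simp: reset_B_def reset_B_index partial_trace_B_add partial_trace_B_smult
      div_less_of_less_mult)

lemma reset_B_trace_preserving: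
  assumes "dB > 0"
  shows "trace_preserving (dA * dB) (reset_B dA dB)"
  unfolding trace_preserving_def
proof
  fix M :: "complex mat" assume M: "M \<in> carrier_mat (dA * dB) (dA * dB)"
  have "mtrace (reset_B dA dB M) = (\<Sum>a<dA. \<Sum>b<dB. reset_B dA dB M $$ (a * dB + b, a * dB + b))"
    by (rule mtrace_tensor_expand) (simp add: reset_B_def)
  also have "\<dots> = (\<Sum>a<dA. \<Sum>b<dB. if b = 0 then partial_trace_B dA dB M $$ (a, a) else 0)"
    by (intro sum.cong refl) (auto simp: reset_B_index mult_add_less_mult)
  also have "\<dots> = mtrace M"
    using assms M by (simp add: mtrace_tensor_expand partial_trace_B_index)
  finally show "mtrace (reset_B dA dB M) = mtrace M" .
qed

lemma reset_B_completely_positive: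
  assumes "dB > 0"
  shows "completely_positive (dA * dB) (reset_B dA dB)"
  unfolding completely_positive_def
proof (intro allI impI)
  fix k :: nat and M :: "complex mat"
  assume k: "k > 0" and M: "psd (dA * dB * k) M"
  let ?n = "dA * dB"
  define g where "g m r = ((r div k div dB) * dB + m) * k + r mod k" for m r
  define \<alpha> where "\<alpha> m r = (if (r div k) mod dB = 0 then 1 else (0::complex))" for m r :: nat
  have bound: "(r div k div dB) * dB + m < ?n" if "r < ?n * k" "m < dB" for r m
    using that by (meson div_less_of_less_mult mult_add_less_mult)
  show "psd (?n * k) (tensor_id (reset_B dA dB) ?n k M)"
  proof (rule psd_kraus_selection[OF M, where g = g and \<alpha> = \<alpha> and L = dB])
    fix m r assume "m < dB" "r < ?n * k"
    thus "g m r < ?n * k" unfolding g_def using bound k mult_add_less_mult by auto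
  next
    fix r c assume r: "r < ?n * k" and c: "c < ?n * k"
    have "r div k < ?n" "c div k < ?n" "r div k div dB < dA" "c div k div dB < dA"
      using r c by (meson div_less_of_less_mult)+
    thus "tensor_id (reset_B dA dB) ?n k M $$ (r, c) =
        (\<Sum>m<dB. \<alpha> m r * M $$ (g m r, g m c) * cnj (\<alpha> m c))"
      using r c k
      by (auto simp: tensor_id_def reset_B_index partial_trace_B_index block_def \<alpha>_def g_def
          mult_add_less_mult intro!: sum.cong)
  qed simp
qed

lemma reset_B_channel: "dB > 0 \<Longrightarrow> channel (dA * dB) (reset_B dA dB)"
  unfolding channel_def
  using reset_B_linear reset_B_trace_preserving reset_B_completely_positive by auto

lemma block_reset_B:
  "k < dB \<Longrightarrow> l < dB \<Longrightarrow> block dA dB (reset_B dA dB M) k l =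
   (if k = 0 \<and> l = 0 then partial_trace_B dA dB M else 0\<^sub>m dA dA)"
  by (intro eq_matI) (auto simp: block_def reset_B_index mult_add_less_mult)

lemma reset_B_tensor_id_commute:
  assumes \<A>: "linear_map_on dA \<A>" and "dB > 0"
  shows "reset_B dA dB (tensor_id \<A> dA dB M) = tensor_id \<A> dA dB (reset_B dA dB M)"
proof (rule eq_matI)
  fix r c assume "r < dim_row (tensor_id \<A> dA dB (reset_B dA dB M))"
    "c < dim_col (tensor_id \<A> dA dB (reset_B dA dB M))"
  hence r: "r < dA * dB" and c: "c < dA * dB" unfolding tensor_id_def by auto
  have "r div dB < dA" "c div dB < dA" "r mod dB < dB" "c mod dB < dB"
    using r c \<open>dB > 0\<close> div_less_of_less_mult by auto
  thus "reset_B dA dB (tensor_id \<A> dA dB M) $$ (r, c) = tensor_id \<A> dA dB (reset_B dA dB M) $$ (r, c)"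
    using r c linear_map_on_carrier[OF \<A> partial_trace_B_carrier]
    by (auto simp: reset_B_index tensor_id_index partial_trace_B_tensor_id[OF \<A>] block_reset_B
        linear_map_on_zero[OF \<A>])
qed (auto simp: tensor_id_def reset_B_def)

lemma reset_B_in_commutant:
  assumes "dB > 0"
  shows "reset_B dA dB \<in> commutant (dA * dB) (local_actions dA dB)"
  unfolding commutant_def local_actions_def
  using reset_B_channel[OF assms] reset_B_tensor_id_commute[OF _ assms] by (auto simp: channel_def)

lemma agent_equiv_if_partial_trace_eq:
  assumes "dB > 0" "density_op (dA * dB) \<rho>" "density_op (dA * dB) \<sigma>"
    and "partial_trace_B dA dB \<rho> = partial_trace_B dA dB \<sigma>"
  shows "agent_equiv (dA * dB) (local_actions dA dB) \<rho> \<sigma>"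
proof -
  have "reset_B dA dB \<rho> = reset_B dA dB \<sigma>"
    unfolding reset_B_def assms(4) ..
  hence "reset_B dA dB \<rho> \<in> Deg (dA * dB) (local_actions dA dB) \<rho> \<inter> Deg (dA * dB) (local_actions dA dB) \<sigma>"
    unfolding Deg_def using reset_B_in_commutant[OF assms(1)] by blast
  thus ?thesis unfolding agent_equiv_def overlap_step_def using assms by blast
qed

section \<open>Replacing A by a pure state\<close>

definition outer :: "nat \<Rightarrow> (nat \<Rightarrow> complex) \<Rightarrow> complex mat" where
  "outer d u = mat d d (\<lambda>(i, j). u i * cnj (u j))"

definition replace :: "nat \<Rightarrow> (nat \<Rightarrow> complex) \<Rightarrow> complex mat \<Rightarrow> complex mat" where
  "replace d u X = mtrace X \<cdot>\<^sub>m outer d u"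

lemma replace_linear: "linear_map_on d (replace d u)"
  unfolding linear_map_on_def replace_def outer_def
  by (auto simp: mtrace_add mtrace_smult algebra_simps)

lemma replace_trace_preserving:
  assumes "(\<Sum>i<d. u i * cnj (u i)) = 1"
  shows "trace_preserving d (replace d u)"
  unfolding trace_preserving_def replace_def
proof
  fix M :: "complex mat" assume "M \<in> carrier_mat d d"
  have "mtrace (mtrace M \<cdot>\<^sub>m outer d u) = mtrace M * mtrace (outer d u)"
    by (rule mtrace_smult[of _ d]) (simp add: outer_def)
  also have "mtrace (outer d u) = 1" using assms by (simp add: outer_def mtrace_def)
  finally show "mtrace (mtrace M \<cdot>\<^sub>m outer d u) = mtrace M" by simp
qed

lemma replace_completely_positive: "completely_positive d (replace d u)"
  unfolding completely_positive_def
proof (intro allI impI)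
  fix k :: nat and M :: "complex mat"
  assume k: "k > 0" and M: "psd (d * k) M"
  define g where "g m r = m * k + r mod k" for m r
  show "psd (d * k) (tensor_id (replace d u) d k M)"
  proof (rule psd_kraus_selection[OF M, where g = g and \<alpha> = "\<lambda>m r. u (r div k)" and L = d])
    fix m r assume "m < d"
    thus "g m r < d * k" unfolding g_def using mult_add_less_mult k by auto
  next
    fix r c assume "r < d * k" "c < d * k"
    thus "tensor_id (replace d u) d k M $$ (r, c) =
        (\<Sum>m<d. u (r div k) * M $$ (g m r, g m c) * cnj (u (c div k)))"
      by (auto simp: tensor_id_def replace_def outer_def mtrace_def block_def g_def
          div_less_of_less_mult sum_distrib_left sum_distrib_right intro!: sum.cong)
  qed simp
qed

lemma replace_channel: "(\<Sum>i<d. u i * cnj (u i)) = 1 \<Longrightarrow> channel d (replace d u)"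
  unfolding channel_def
  using replace_linear replace_trace_preserving replace_completely_positive by auto

lemma partial_trace_B_replace:
  "X \<in> carrier_mat (dA * dB) (dA * dB) \<Longrightarrow>
   partial_trace_B dA dB (tensor_id (replace dA u) dA dB X) = mtrace X \<cdot>\<^sub>m outer dA u"
  by (simp add: partial_trace_B_tensor_id[OF replace_linear] replace_def mtrace_partial_trace_B)

section \<open>The commutant preserves the partial trace\<close>

definition fixes_partial_trace_B ::
    "nat \<Rightarrow> nat \<Rightarrow> (complex mat \<Rightarrow> complex mat) \<Rightarrow> complex mat \<Rightarrow> bool" where
  "fixes_partial_trace_B dA dB \<B> M \<longleftrightarrow> partial_trace_B dA dB (\<B> M) = partial_trace_B dA dB M"

lemma fixes_partial_trace_B_zero:
  "linear_map_on (dA * dB) \<B> \<Longrightarrow> fixes_partial_trace_B dA dB \<B> (0\<^sub>m (dA * dB) (dA * dB))"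
  unfolding fixes_partial_trace_B_def by (simp add: linear_map_on_zero)

lemma fixes_partial_trace_B_add_smult:
  assumes \<B>: "linear_map_on (dA * dB) \<B>"
    and M: "M \<in> carrier_mat (dA * dB) (dA * dB)" and N: "N \<in> carrier_mat (dA * dB) (dA * dB)"
    and "fixes_partial_trace_B dA dB \<B> M" "fixes_partial_trace_B dA dB \<B> N"
  shows "fixes_partial_trace_B dA dB \<B> (M + c \<cdot>\<^sub>m N)"
  using assms linear_map_on_carrier[OF \<B> M] linear_map_on_carrier[OF \<B> N]
  unfolding fixes_partial_trace_B_def
  by (simp add: linear_map_on_add[OF \<B>] linear_map_on_smult[OF \<B>]
      partial_trace_B_add partial_trace_B_smult)

definition tensor_op :: "nat \<Rightarrow> nat \<Rightarrow> (nat \<Rightarrow> nat \<Rightarrow> complex) \<Rightarrow> complex mat \<Rightarrow> complex mat" where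
  "tensor_op dA dB w Y =
     mat (dA * dB) (dA * dB) (\<lambda>(r, c). w (r div dB) (c div dB) * Y $$ (r mod dB, c mod dB))"

lemma tensor_op_carrier [simp]: "tensor_op dA dB w Y \<in> carrier_mat (dA * dB) (dA * dB)"
  unfolding tensor_op_def by simp

lemma tensor_op_index:
  "r < dA * dB \<Longrightarrow> c < dA * dB \<Longrightarrow>
   tensor_op dA dB w Y $$ (r, c) = w (r div dB) (c div dB) * Y $$ (r mod dB, c mod dB)"
  unfolding tensor_op_def by simp

lemma tensor_op_add_smult:
  "tensor_op dA dB (\<lambda>i j. w i j + c * w' i j) Y = tensor_op dA dB w Y + c \<cdot>\<^sub>m tensor_op dA dB w' Y"
  by (intro eq_matI) (auto simp: tensor_op_def algebra_simps)

lemma tensor_id_replace_tensor_op: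
  assumes "dA > 0" "dB > 0"
  shows "tensor_id (replace dA u) dA dB (tensor_op dA dB (\<lambda>i j. if i = 0 \<and> j = 0 then 1 else 0) Y) =
         tensor_op dA dB (\<lambda>i j. u i * cnj (u j)) Y"
    (is "tensor_id _ _ _ ?X = _")
proof (rule eq_matI)
  have trace_block: "mtrace (block dA dB ?X k l) = Y $$ (k, l)" if "k < dB" "l < dB" for k l
  proof -
    have "mtrace (block dA dB ?X k l) = (\<Sum>a<dA. if a = 0 then Y $$ (k, l) else 0)"
      unfolding mtrace_def using that
      by (intro sum.cong) (auto simp: block_def tensor_op_def mult_add_less_mult)
    thus ?thesis using assms by simp
  qed
  fix r c assume "r < dim_row (tensor_op dA dB (\<lambda>i j. u i * cnj (u j)) Y)"
    "c < dim_col (tensor_op dA dB (\<lambda>i j. u i * cnj (u j)) Y)"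
  hence "r < dA * dB" "c < dA * dB" unfolding tensor_op_def by auto
  with assms show "tensor_id (replace dA u) dA dB ?X $$ (r, c) =
      tensor_op dA dB (\<lambda>i j. u i * cnj (u j)) Y $$ (r, c)"
    by (simp add: tensor_id_index replace_def outer_def trace_block tensor_op_index
        div_less_of_less_mult)
qed (auto simp: tensor_op_def tensor_id_def)

lemma commutant_fixes_partial_trace_B_pure:
  assumes "dA > 0" "dB > 0" and \<B>: "\<B> \<in> commutant (dA * dB) (local_actions dA dB)"
    and u: "(\<Sum>i<dA. u i * cnj (u i)) = 1"
  shows "fixes_partial_trace_B dA dB \<B> (tensor_op dA dB (\<lambda>i j. u i * cnj (u j)) Y)"
proof -
  let ?R = "tensor_id (replace dA u) dA dB"
  define X where "X = tensor_op dA dB (\<lambda>i j. if i = 0 \<and> j = 0 then 1 else 0) Y"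
  have X: "X \<in> carrier_mat (dA * dB) (dA * dB)" unfolding X_def by simp
  have BX: "\<B> X \<in> carrier_mat (dA * dB) (dA * dB)"
    using linear_map_on_carrier[OF commutantD(1)[OF \<B>] X] .
  have "?R \<in> local_actions dA dB"
    unfolding local_actions_def using replace_channel[OF u] by auto
  hence "partial_trace_B dA dB (\<B> (?R X)) = partial_trace_B dA dB (?R (\<B> X))"
    using commutantD(3)[OF \<B> _ X] by simp
  also have "\<dots> = mtrace (\<B> X) \<cdot>\<^sub>m outer dA u" using partial_trace_B_replace[OF BX] .
  also have "mtrace (\<B> X) = mtrace X"
    using commutantD(2)[OF \<B>] X unfolding trace_preserving_def by auto
  also have "mtrace X \<cdot>\<^sub>m outer dA u = partial_trace_B dA dB (?R X)"
    using partial_trace_B_replace[OF X] by simp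
  finally show ?thesis
    unfolding fixes_partial_trace_B_def X_def tensor_id_replace_tensor_op[OF assms(1,2)] .
qed

text \<open>Polarisation: for \<open>a \<noteq> b\<close>, with \<open>u\<^sub>1 = (e\<^sub>a + e\<^sub>b)/\<surd>2\<close> and \<open>u\<^sub>2 = (e\<^sub>a + \<i> e\<^sub>b)/\<surd>2\<close>,
  \<open>E\<^sub>a\<^sub>b = u\<^sub>1u\<^sub>1\<^sup>* + \<i> u\<^sub>2u\<^sub>2\<^sup>* - (1 + \<i>)/2 (E\<^sub>a\<^sub>a + E\<^sub>b\<^sub>b)\<close>.\<close>

lemma commutant_fixes_partial_trace_B_unit:
  assumes "dA > 0" "dB > 0" and \<B>: "\<B> \<in> commutant (dA * dB) (local_actions dA dB)"
    and ab: "a < dA" "b < dA"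
  shows "fixes_partial_trace_B dA dB \<B> (tensor_op dA dB (\<lambda>i j. if i = a \<and> j = b then 1 else 0) Y)"
proof -
  note pure = commutant_fixes_partial_trace_B_pure[OF assms(1-3)]
  have comb: "fixes_partial_trace_B dA dB \<B> (tensor_op dA dB (\<lambda>i j. w i j + c * w' i j) Y)"
    if "fixes_partial_trace_B dA dB \<B> (tensor_op dA dB w Y)"
      "fixes_partial_trace_B dA dB \<B> (tensor_op dA dB w' Y)" for w w' c
    unfolding tensor_op_add_smult
    using fixes_partial_trace_B_add_smult[OF commutantD(1)[OF \<B>] tensor_op_carrier tensor_op_carrier that] .
  define e :: "nat \<Rightarrow> nat \<Rightarrow> complex" where "e x i = (if i = x then 1 else 0)" for x i
  have unit_e: "(\<Sum>i<dA. e x i * cnj (e x i)) = 1" if "x < dA" for x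
    using that by (simp add: e_def if_distrib cong: if_cong)
  have diag: "fixes_partial_trace_B dA dB \<B> (tensor_op dA dB (\<lambda>i j. e x i * cnj (e x j)) Y)"
    if "x < dA" for x
    using pure[OF unit_e[OF that]] .
  show ?thesis
  proof (cases "a = b")
    case True
    have "(\<lambda>i j. e a i * cnj (e a j)) = (\<lambda>i j. if i = a \<and> j = b then 1 else 0)"
      using True unfolding e_def by (intro ext) auto
    thus ?thesis using diag[OF ab(1)] by simp
  next
    case False
    define s where "s = complex_of_real (sqrt (1/2))"
    have s: "s * s = 1/2" "cnj s = s" unfolding s_def by (simp_all flip: of_real_mult)
    define u1 where "u1 i = s * (e a i + e b i)" for i
    define u2 where "u2 i = s * (e a i + \<i> * e b i)" for i
    have norm_sum: "(\<Sum>i<dA. s * s * (e a i + e b i)) = 1"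
      using False ab s by (simp add: e_def sum.distrib sum_distrib_left[symmetric])
    have "(\<Sum>i<dA. u1 i * cnj (u1 i)) = (\<Sum>i<dA. s * s * (e a i + e b i))"
      "(\<Sum>i<dA. u2 i * cnj (u2 i)) = (\<Sum>i<dA. s * s * (e a i + e b i))"
      using False s unfolding u1_def u2_def e_def by (auto intro!: sum.cong)
    hence u1: "fixes_partial_trace_B dA dB \<B> (tensor_op dA dB (\<lambda>i j. u1 i * cnj (u1 j)) Y)"
      and u2: "fixes_partial_trace_B dA dB \<B> (tensor_op dA dB (\<lambda>i j. u2 i * cnj (u2 j)) Y)"
      using pure norm_sum by simp_all
    have "(\<lambda>i j. if i = a \<and> j = b then 1 else 0) =
      (\<lambda>i j. ((u1 i * cnj (u1 j) + \<i> * (u2 i * cnj (u2 j))) + - (1 + \<i>) / 2 * (e a i * cnj (e a j)))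
             + - (1 + \<i>) / 2 * (e b i * cnj (e b j)))"
      using False s unfolding u1_def u2_def e_def
      by (intro ext) (auto simp: algebra_simps complex_eq_iff)
    thus ?thesis
      using comb[OF comb[OF comb[OF u1 u2, where c = \<i>] diag[OF ab(1)], where c = "- (1 + \<i>) / 2"]
          diag[OF ab(2)], where c = "- (1 + \<i>) / 2"]
      by simp
  qed
qed

lemma commutant_fixes_partial_trace_B:
  assumes "dA > 0" "dB > 0" and \<B>: "\<B> \<in> commutant (dA * dB) (local_actions dA dB)"
    and M: "M \<in> carrier_mat (dA * dB) (dA * dB)"
  shows "partial_trace_B dA dB (\<B> M) = partial_trace_B dA dB M"
  unfolding fixes_partial_trace_B_def[symmetric]
  using M
proof (rule carrier_mat_induct_units)
  have \<B>_linear: "linear_map_on (dA * dB) \<B>" using commutantD(1)[OF \<B>] .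
  show "fixes_partial_trace_B dA dB \<B> (0\<^sub>m (dA * dB) (dA * dB))"
    using fixes_partial_trace_B_zero[OF \<B>_linear] .
  show "fixes_partial_trace_B dA dB \<B> (A + c \<cdot>\<^sub>m B)"
    if "A \<in> carrier_mat (dA * dB) (dA * dB)" "B \<in> carrier_mat (dA * dB) (dA * dB)"
      "fixes_partial_trace_B dA dB \<B> A" "fixes_partial_trace_B dA dB \<B> B" for A B c
    using fixes_partial_trace_B_add_smult[OF \<B>_linear that] .
  fix r c assume r: "r < dA * dB" and c: "c < dA * dB"
  have "mat (dA * dB) (dA * dB) (\<lambda>rc. if rc = (r, c) then 1 else 0) =
    tensor_op dA dB (\<lambda>i j. if i = r div dB \<and> j = c div dB then 1 else 0)
      (mat dB dB (\<lambda>kl. if kl = (r mod dB, c mod dB) then 1 else 0))"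
    using \<open>dB > 0\<close> by (intro eq_matI) (auto simp: tensor_op_def, (metis div_mult_mod_eq)+)
  thus "fixes_partial_trace_B dA dB \<B> (mat (dA * dB) (dA * dB) (\<lambda>rc. if rc = (r, c) then 1 else 0))"
    using commutant_fixes_partial_trace_B_unit[OF assms(1-3)] r c div_less_of_less_mult by simp
qed

lemma partial_trace_eq_if_agent_equiv:
  assumes "dA > 0" "dB > 0" "agent_equiv (dA * dB) (local_actions dA dB) \<rho> \<sigma>"
  shows "partial_trace_B dA dB \<rho> = partial_trace_B dA dB \<sigma>"
proof -
  have "(overlap_step (dA * dB) (local_actions dA dB))\<^sup>*\<^sup>* \<rho> \<sigma>"
    using assms(3) unfolding agent_equiv_def by auto
  thus ?thesis
  proof (induction rule: rtranclp_induct)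
    case (step \<tau> \<tau>')
    then obtain \<B> \<B>' where \<B>: "\<B> \<in> commutant (dA * dB) (local_actions dA dB)"
      and \<B>': "\<B>' \<in> commutant (dA * dB) (local_actions dA dB)" and "\<B> \<tau> = \<B>' \<tau>'"
      and "density_op (dA * dB) \<tau>" "density_op (dA * dB) \<tau>'"
      unfolding overlap_step_def Deg_def by blast
    thus ?case
      using step.IH commutant_fixes_partial_trace_B[OF assms(1,2)] \<B> \<B>'
      by (metis density_op_def psd_def)
  qed simp
qed

theorem mainTheorem3:
  fixes dA dB :: nat and \<rho> \<sigma> :: "complex mat"
  assumes "dA > 0" and "dB > 0"
    and "density_op (dA * dB) \<rho>" and "density_op (dA * dB) \<sigma>"
  shows "agent_equiv (dA * dB) (local_actions dA dB) \<rho> \<sigma> \<longleftrightarrow>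
         partial_trace_B dA dB \<rho> = partial_trace_B dA dB \<sigma>"
  using partial_trace_eq_if_agent_equiv[OF assms(1,2)]
    agent_equiv_if_partial_trace_eq[OF assms(2-4)] by blast

end
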